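(* For any $\mathbf a=(a,\alpha)\in\mathbb R^2$ and $\varepsilon\ge0$, every minimiser of $\Sigma^\varepsilon_f$ over $H^2_{\mathbf a}$ belongs to $\{\bar h\}\cup\{h_\ell:\ell\in(0,1)\}$, where $\bar h(t)=a+\alpha t$ and $h_\ell(t)=h^{*,(0,\ell)}_{(\mathbf a,\mathbf 0)}(t)$ for $t\in[0,\ell)$, $h_\ell(t)=0$ for $t\in[\ell,1]$.
   Context: $H^2_{\mathbf a}=\{h\in H^2([0,1]):h(0)=a,\dot h(0)=\alpha\}$. $\tau(\varepsilon)\ge0$ is the pinning free energy (a fixed nonnegative number for each $\varepsilon$). $\Sigma^\varepsilon_f(h)=\frac12\int_0^1\ddot h^2\,dt-\tau(\varepsilon)|\{t\in[0,1]:h(t)=0\}|$ on $H^2_{\mathbf a}$. For an interval $I=(0,\ell)$, $h^{*,(0,\ell)}_{(\mathbf a,\mathbf 0)}$ is the unique minimiser of $\frac12\int_0^\ell\ddot h^2\,dt$ among $h\in H^2((0,\ell))$ with $h(0)=a,\dot h(0)=\alpha,h(\ell)=0,\dot h(\ell)=0$ (a cubic polynomial). *)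

theory Defs
  imports "HOL-Analysis.Analysis"
begin

text \<open>Sobolev space H^2 on an interval [0,L], via the standard characterisation on an
interval: h has an absolutely continuous derivative h1 whose a.e. derivative h2 lies in L^2.
Concretely h1 t = h1 0 + int_0^t h2 and h t = h 0 + int_0^t h1 on [0,L],
with h2 square-integrable (hence integrable) on [0,L].\<close>

definition H2_weak :: "real \<Rightarrow> (real \<Rightarrow> real) \<Rightarrow> (real \<Rightarrow> real) \<Rightarrow> (real \<Rightarrow> real) \<Rightarrow> bool" where
  "H2_weak L h h1 h2 \<longleftrightarrow>
     integrable (lebesgue_on {0..L}) h2 \<and>
     integrable (lebesgue_on {0..L}) (\<lambda>t. (h2 t)\<^sup>2) \<and>
     (\<forall>t\<in>{0..L}. h1 t = h1 0 + integral\<^sup>L (lebesgue_on {0..t}) h2) \<and>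
     (\<forall>t\<in>{0..L}. h t = h 0 + integral\<^sup>L (lebesgue_on {0..t}) h1)"

text \<open>Bending energy (1/2) int_0^L (h'')^2; h'' is determined a.e., so the choice is irrelevant.\<close>
definition bending :: "real \<Rightarrow> (real \<Rightarrow> real) \<Rightarrow> real" where
  "bending L h = (let h2 = (SOME h2. \<exists>h1. H2_weak L h h1 h2)
                  in integral\<^sup>L (lebesgue_on {0..L}) (\<lambda>t. (h2 t)\<^sup>2) / 2)"

definition H2a :: "real \<Rightarrow> real \<Rightarrow> (real \<Rightarrow> real) set" where
  "H2a a \<alpha> = {h. \<exists>h1 h2. H2_weak 1 h h1 h2 \<and> h 0 = a \<and> h1 0 = \<alpha>}"

definition Sigma_f :: "real \<Rightarrow> (real \<Rightarrow> real) \<Rightarrow> real" where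
  "Sigma_f \<tau> h = bending 1 h - \<tau> * measure lebesgue {t\<in>{0..1}. h t = 0}"

definition is_minimiser :: "real \<Rightarrow> real \<Rightarrow> real \<Rightarrow> (real \<Rightarrow> real) \<Rightarrow> bool" where
  "is_minimiser \<tau> a \<alpha> h \<longleftrightarrow> h \<in> H2a a \<alpha> \<and> (\<forall>g\<in>H2a a \<alpha>. Sigma_f \<tau> h \<le> Sigma_f \<tau> g)"

definition H2_clamped :: "real \<Rightarrow> real \<Rightarrow> real \<Rightarrow> (real \<Rightarrow> real) set" where
  "H2_clamped l a \<alpha> = {h. \<exists>h1 h2. H2_weak l h h1 h2 \<and> h 0 = a \<and> h1 0 = \<alpha> \<and> h l = 0 \<and> h1 l = 0}"

definition is_clamped_min :: "real \<Rightarrow> real \<Rightarrow> real \<Rightarrow> (real \<Rightarrow> real) \<Rightarrow> bool" where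
  "is_clamped_min l a \<alpha> c \<longleftrightarrow> c \<in> H2_clamped l a \<alpha> \<and> (\<forall>g\<in>H2_clamped l a \<alpha>. bending l c \<le> bending l g)"

end

theory Submission
  imports Defs
begin

text \<open>Let \<open>Z\<close> be the zero set of a minimiser \<open>h\<close>. If \<open>Z\<close> is null, comparison with the affine
  function \<open>a + \<alpha> t\<close> shows that \<open>h\<close> has no bending energy, so \<open>h\<close> is affine. Otherwise let \<open>l\<close>
  be the first point such that \<open>Z\<close> has positive measure in every interval \<open>[l, t]\<close>: then
  \<open>|Z| \<le> 1 - l\<close>, and \<open>h\<close> and \<open>h'\<close> vanish at \<open>l\<close>, since by Rolle's theorem both have zeros
  arbitrarily close to \<open>l\<close> on the right. Every clamped competitor on \<open>[0, l]\<close>, extended by zero,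
  is pinned on a set of measure at least \<open>1 - l \<ge> |Z|\<close>, so minimality bounds the bending energy of
  \<open>h\<close> on \<open>[0, 1]\<close> by that of every clamped competitor, among them \<open>h\<close> itself on \<open>[0, l]\<close>.
  Hence \<open>h\<close> is a clamped minimiser on \<open>[0, l]\<close> and has no bending energy on \<open>[l, 1]\<close>, where it
  is therefore affine with zero data at \<open>l\<close>, i.e.\ zero.\<close>

section \<open>Measure and integration on intervals\<close>

lemma integral_lebesgue_on_eq_indicator:
  fixes d :: "real \<Rightarrow> real"
  assumes "S \<in> sets lebesgue"
  shows "integral\<^sup>L (lebesgue_on S) d = integral\<^sup>L lebesgue (\<lambda>x. indicator S x * d x)"
  using integral_restrict_space[of S lebesgue d] assms by simp

lemma integrable_lebesgue_on_iff_indicator: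
  fixes d :: "real \<Rightarrow> real"
  assumes "S \<in> sets lebesgue"
  shows "integrable (lebesgue_on S) d \<longleftrightarrow> integrable lebesgue (\<lambda>x. indicator S x * d x)"
  using integrable_restrict_space[of S lebesgue d] assms by simp

lemma integral_lebesgue_on_subinterval_eq_integral:
  fixes f :: "real \<Rightarrow> real"
  assumes "integrable (lebesgue_on {a..b}) f" "{c..d} \<subseteq> {a..b}"
  shows "integral\<^sup>L (lebesgue_on {c..d}) f = integral {c..d} f"
  using integrable_subinterval[OF assms] by (simp add: lebesgue_integral_eq_integral)

lemma integral_lebesgue_on_const:
  "a \<le> b \<Longrightarrow> integral\<^sup>L (lebesgue_on {a..b}) (\<lambda>_. c) = c * (b - (a::real))"
  using integral_lebesgue_on_subinterval_eq_integral[of a b "\<lambda>_. c" a b]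
    continuous_imp_integrable_real[of a b "\<lambda>_. c"] by simp

lemma ennreal_eq_if_enn2real_eq:
  fixes a b :: ennreal
  assumes "a \<noteq> \<infinity>" "b \<noteq> \<infinity>" "enn2real a = enn2real b"
  shows "a = b"
proof -
  have "a = ennreal (enn2real a)" using assms(1) by (simp add: less_top)
  also have "\<dots> = ennreal (enn2real b)" using assms(3) by simp
  also have "\<dots> = b" using assms(2) by (simp add: less_top)
  finally show ?thesis .
qed

text \<open>The positive and negative parts of \<open>f\<close> have densities that agree on all rays
  \<open>{x<..}\<close>, hence they define the same measure.\<close>

lemma AE_eq_0_if_integral_greaterThan_eq_0:
  fixes f :: "real \<Rightarrow> real"
  assumes [measurable]: "f \<in> borel_measurable borel" and f: "integrable lborel f"
    and zero: "\<And>x. integral\<^sup>L lborel (\<lambda>y. indicator {x<..} y * f y) = 0"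
  shows "AE x in lborel. f x = 0"
proof -
  let ?M = "density lborel (\<lambda>x. ennreal (f x))"
  let ?N = "density lborel (\<lambda>x. ennreal (- f x))"
  have "?M = ?N"
  proof (rule measure_eqI_lessThan)
    show "sets ?M = sets borel" "sets ?N = sets borel" by auto
    fix x :: real
    have int: "integrable lborel (\<lambda>y. indicator {x<..} y * f y)"
      using integrable_mult_indicator[of "{x<..}" lborel f] f by simp
    have M: "emeasure ?M {x<..} = (\<integral>\<^sup>+ y. ennreal (indicator {x<..} y * f y) \<partial>lborel)"
      by (subst emeasure_density) (auto intro!: nn_integral_cong simp: indicator_def ennreal_mult')
    have N: "emeasure ?N {x<..} = (\<integral>\<^sup>+ y. ennreal (- (indicator {x<..} y * f y)) \<partial>lborel)"
      by (subst emeasure_density) (auto intro!: nn_integral_cong simp: indicator_def)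
    have fin: "(\<integral>\<^sup>+ y. ennreal (indicator {x<..} y * f y) \<partial>lborel) \<noteq> \<infinity>"
      "(\<integral>\<^sup>+ y. ennreal (- (indicator {x<..} y * f y)) \<partial>lborel) \<noteq> \<infinity>"
      using integrableD[OF int] by auto
    have "enn2real (\<integral>\<^sup>+ y. ennreal (indicator {x<..} y * f y) \<partial>lborel)
        = enn2real (\<integral>\<^sup>+ y. ennreal (- (indicator {x<..} y * f y)) \<partial>lborel)"
      using real_lebesgue_integral_def[OF int] zero[of x] by simp
    then have "(\<integral>\<^sup>+ y. ennreal (indicator {x<..} y * f y) \<partial>lborel)
        = (\<integral>\<^sup>+ y. ennreal (- (indicator {x<..} y * f y)) \<partial>lborel)"
      by (rule ennreal_eq_if_enn2real_eq[OF fin])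
    with M N show "emeasure ?M {x<..} = emeasure ?N {x<..}" by simp
    show "emeasure ?M {x<..} < \<infinity>" using M fin by (simp add: less_top)
  qed
  then have "AE x in lborel. ennreal (f x) = ennreal (- f x)"
    by (intro sigma_finite_measure.density_unique[OF sigma_finite_lborel]) auto
  then show ?thesis
    by eventually_elim (smt (verit) ennreal_eq_0_iff ennreal_neg)
qed

lemma integral_greaterThan_eq_0_if_indefinite_integral_eq_0:
  fixes d :: "real \<Rightarrow> real"
  assumes d: "integrable (lebesgue_on {0..L}) d"
    and zero: "\<forall>t\<in>{0..L}. integral\<^sup>L (lebesgue_on {0..t}) d = 0"
  shows "integral\<^sup>L lebesgue (\<lambda>y. indicator {x<..} y * (indicator {0..L} y * d y)) = 0"
proof -
  have int: "integrable lebesgue (\<lambda>y. indicator {0..t} y * d y)" if "t \<le> L" for t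
  proof (cases "0 \<le> t")
    case True
    then show ?thesis using that integrable_subinterval[OF d, of 0 t]
      integrable_lebesgue_on_iff_indicator[of "{0..t}" d] by simp
  qed simp
  have zero': "integral\<^sup>L lebesgue (\<lambda>y. indicator {0..t} y * d y) = 0" if "t \<le> L" for t
  proof (cases "0 \<le> t")
    case True
    then show ?thesis using that zero integral_lebesgue_on_eq_indicator[of "{0..t}" d] by simp
  qed simp
  have "integral\<^sup>L lebesgue (\<lambda>y. indicator {x<..} y * (indicator {0..L} y * d y))
      = integral\<^sup>L lebesgue (\<lambda>y. indicator {0..L} y * d y - indicator {0..min x L} y * d y)"
    by (rule arg_cong[where f="integral\<^sup>L lebesgue"]) (auto simp: indicator_def)
  also have "\<dots>
      = integral\<^sup>L lebesgue (\<lambda>y. indicator {0..L} y * d y)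
        - integral\<^sup>L lebesgue (\<lambda>y. indicator {0..min x L} y * d y)"
    using int[of L] int[of "min x L"] by (intro Bochner_Integration.integral_diff) auto
  also have "\<dots> = 0" using zero'[of L] zero'[of "min x L"] by simp
  finally show ?thesis .
qed

lemma AE_eq_0_if_indefinite_integral_eq_0:
  fixes d :: "real \<Rightarrow> real"
  assumes d: "integrable (lebesgue_on {0..L}) d"
    and zero: "\<forall>t\<in>{0..L}. integral\<^sup>L (lebesgue_on {0..t}) d = 0"
  shows "AE x in lebesgue_on {0..L}. d x = 0"
proof -
  define f where "f = (\<lambda>x. indicator {0..L} x * d x)"
  have f: "integrable lebesgue f"
    using d integrable_lebesgue_on_iff_indicator[of "{0..L}" d] by (simp add: f_def)
  then obtain g where g[measurable]: "g \<in> borel_measurable lborel"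
    and "AE x in lborel. f x = g x"
    using completion_ex_borel_measurable_real by blast
  then have fg: "AE x in lebesgue. f x = g x" by (auto intro: AE_completion)
  have g_lebesgue: "integrable lebesgue g"
    using integrable_cong_AE_imp[OF f measurable_completion[OF g] fg] .
  then have "integrable lborel g"
    using integrable_completion[of g lborel] g by simp
  then have "AE x in lborel. g x = 0"
  proof (rule AE_eq_0_if_integral_greaterThan_eq_0[rotated])
    show "g \<in> borel_measurable borel" using g by simp
    fix x :: real
    have "integral\<^sup>L lborel (\<lambda>y. indicator {x<..} y * g y)
        = integral\<^sup>L lebesgue (\<lambda>y. indicator {x<..} y * g y)"
      using integral_completion[of "\<lambda>y. indicator {x<..} y * g y" lborel] by simp
    also have "\<dots> = integral\<^sup>L lebesgue (\<lambda>y. indicator {x<..} y * f y)"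
    proof (rule integral_cong_AE)
      show "(\<lambda>y. indicator {x<..} y * g y) \<in> borel_measurable lebesgue"
        using integrable_mult_indicator[of "{x<..}" lebesgue g] g_lebesgue by simp
      show "(\<lambda>y. indicator {x<..} y * f y) \<in> borel_measurable lebesgue"
        using integrable_mult_indicator[of "{x<..}" lebesgue f] f by simp
      show "AE y in lebesgue. indicator {x<..} y * g y = indicator {x<..} y * f y"
        using fg by eventually_elim simp
    qed
    also have "\<dots> = 0"
      unfolding f_def by (rule integral_greaterThan_eq_0_if_indefinite_integral_eq_0[OF d zero])
    finally show "integral\<^sup>L lborel (\<lambda>y. indicator {x<..} y * g y) = 0" .
  qed
  then have "AE x in lebesgue. g x = 0" by (rule AE_completion)
  with fg have "AE x in lebesgue. x \<in> {0..L} \<longrightarrow> d x = 0"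
    by eventually_elim (auto simp: f_def indicator_def)
  then show ?thesis by (subst AE_restrict_space_iff) auto
qed

lemma AE_lebesgue_on_singleton: "AE x in lebesgue_on {c::real}. P x"
  by (rule AE_I[where N="{c}"]) (auto simp: emeasure_restrict_space)

lemma continuous_on_zero_set_lmeasurable:
  fixes g :: "real \<Rightarrow> real"
  assumes "continuous_on {0..L} g"
  shows "{t\<in>{0..L}. g t = 0} \<in> lmeasurable"
proof -
  have "closed {t\<in>{0..L}. g t = 0}"
    using assms by (rule continuous_closed_preimage_constant) simp
  moreover have "bounded {t\<in>{0..L}. g t = 0}"
    by (rule bounded_subset[of "{0..L}"]) auto
  ultimately show ?thesis by (intro lmeasurable_compact) (simp add: compact_eq_bounded_closed)
qed

section \<open>Functions given by indefinite integrals\<close>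

lemma increment_eq_integral:
  fixes F f :: "real \<Rightarrow> real"
  assumes f: "integrable (lebesgue_on {0..L}) f"
    and F: "\<forall>t\<in>{0..L}. F t = F 0 + integral\<^sup>L (lebesgue_on {0..t}) f"
    and st: "0 \<le> s" "s \<le> t" "t \<le> L"
  shows "F t - F s = integral\<^sup>L (lebesgue_on {s..t}) f"
proof -
  have "integral\<^sup>L (lebesgue_on {0..t}) f
      = integral\<^sup>L (lebesgue_on {0..s}) f + integral\<^sup>L (lebesgue_on {s..t}) f"
    using integrable_subinterval[OF f, of 0 t] st by (intro integral_combine) auto
  moreover have "t \<in> {0..L}" "s \<in> {0..L}" using st by auto
  then have "F t = F 0 + integral\<^sup>L (lebesgue_on {0..t}) f"
    and "F s = F 0 + integral\<^sup>L (lebesgue_on {0..s}) f"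
    using F by blast+
  ultimately show ?thesis by linarith
qed

lemma continuous_on_indefinite_integral:
  fixes F f :: "real \<Rightarrow> real"
  assumes f: "integrable (lebesgue_on {0..L}) f"
    and F: "\<forall>t\<in>{0..L}. F t = F 0 + integral\<^sup>L (lebesgue_on {0..t}) f"
  shows "continuous_on {0..L} F"
proof -
  have "continuous_on {0..L} (\<lambda>t. F 0 + integral\<^sup>L (lebesgue_on {0..t}) f)"
    by (rule continuous_on_add[OF continuous_on_const indefinite_integral_continuous_real[OF f]])
  then show ?thesis
  proof (rule continuous_on_eq)
    fix x assume x: "x \<in> {0..L}"
    show "F 0 + integral\<^sup>L (lebesgue_on {0..x}) f = F x" using bspec[OF F x] by simp
  qed
qed

lemma has_real_derivative_indefinite_integral:
  fixes F f :: "real \<Rightarrow> real"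
  assumes f: "continuous_on {0..L} f"
    and F: "\<forall>t\<in>{0..L}. F t = F 0 + integral\<^sup>L (lebesgue_on {0..t}) f"
    and t: "t \<in> {0..L}"
  shows "(F has_real_derivative f t) (at t within {0..L})"
proof -
  have F': "F 0 + integral {0..x} f = F x" if "x \<in> {0..L}" for x
  proof -
    have "integral\<^sup>L (lebesgue_on {0..x}) f = integral {0..x} f"
      using that continuous_imp_integrable_real[OF f]
      by (intro integral_lebesgue_on_subinterval_eq_integral) auto
    moreover have "F x = F 0 + integral\<^sup>L (lebesgue_on {0..x}) f" using F that by blast
    ultimately show ?thesis by simp
  qed
  have "((\<lambda>x. F 0 + integral {0..x} f) has_real_derivative f t) (at t within {0..L})"
    using DERIV_add[OF DERIV_const integral_has_real_derivative[OF f t]] by simp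
  then show ?thesis
    by (rule has_field_derivative_transform_within[where d=1]) (use t F' in auto)
qed

section \<open>Weak \<open>H\<^sup>2\<close> functions and their bending energy\<close>

lemma H2_weakD:
  assumes "H2_weak L h h1 h2"
  shows "integrable (lebesgue_on {0..L}) h2"
    and "integrable (lebesgue_on {0..L}) (\<lambda>t. (h2 t)\<^sup>2)"
    and "\<forall>t\<in>{0..L}. h1 t = h1 0 + integral\<^sup>L (lebesgue_on {0..t}) h2"
    and "\<forall>t\<in>{0..L}. h t = h 0 + integral\<^sup>L (lebesgue_on {0..t}) h1"
  using assms unfolding H2_weak_def by blast+

lemma H2_weak_continuous_derivative:
  assumes "H2_weak L h h1 h2"
  shows "continuous_on {0..L} h1"
  using continuous_on_indefinite_integral[OF H2_weakD(1,3)[OF assms]] .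

lemma H2_weak_integrable_derivative:
  assumes "H2_weak L h h1 h2"
  shows "integrable (lebesgue_on {0..L}) h1"
  using continuous_imp_integrable_real[OF H2_weak_continuous_derivative[OF assms]] .

lemma H2_weak_continuous:
  assumes "H2_weak L h h1 h2"
  shows "continuous_on {0..L} h"
  using continuous_on_indefinite_integral[OF H2_weak_integrable_derivative[OF assms] H2_weakD(4)[OF assms]] .

lemma H2_weak_has_derivative:
  assumes "H2_weak L h h1 h2" "t \<in> {0..L}"
  shows "(h has_real_derivative h1 t) (at t within {0..L})"
  using has_real_derivative_indefinite_integral[OF H2_weak_continuous_derivative[OF assms(1)]
      H2_weakD(4)[OF assms(1)] assms(2)] .

lemma H2_weak_restrict:
  assumes H: "H2_weak L h h1 h2" and l: "0 \<le> l" "l \<le> L"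
  shows "H2_weak l h h1 h2"
proof -
  have "{0..l} \<subseteq> {0..L}" using l by auto
  then show ?thesis using H integrable_subinterval[of 0 L _ 0 l] unfolding H2_weak_def by blast
qed

lemma H2_weak_linear: "H2_weak L (\<lambda>t. a + \<alpha> * t) (\<lambda>_. \<alpha>) (\<lambda>_. 0)"
  unfolding H2_weak_def
proof (intro conjI ballI)
  fix t :: real assume "t \<in> {0..L}"
  then show "a + \<alpha> * t = a + \<alpha> * 0 + integral\<^sup>L (lebesgue_on {0..t}) (\<lambda>_. \<alpha>)"
    using integral_lebesgue_on_const[of 0 t \<alpha>] by auto
qed simp_all

lemma H2_weak_derivative_unique:
  assumes H: "H2_weak L h h1 h2" and G: "H2_weak L h g1 g2" and t: "0 < L" "t \<in> {0..L}"
  shows "h1 t = g1 t"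
  using vector_derivative_unique_within_closed_interval[of 0 L t h "h1 t" "g1 t"]
    H2_weak_has_derivative[OF H t(2)] H2_weak_has_derivative[OF G t(2)] t
  by (simp add: has_real_derivative_iff_has_vector_derivative)

lemma H2_weak_second_derivative_unique_AE:
  assumes H: "H2_weak L h h1 h2" and G: "H2_weak L h g1 g2" and L: "0 \<le> L"
  shows "AE x in lebesgue_on {0..L}. h2 x = g2 x"
proof (cases "L = 0")
  case True
  then have "{0..L} = {0}" by simp
  then show ?thesis by (simp only:) (rule AE_lebesgue_on_singleton)
next
  case False
  note h2 = H2_weakD(1)[OF H] and g2 = H2_weakD(1)[OF G]
  have "AE x in lebesgue_on {0..L}. h2 x - g2 x = 0"
  proof (rule AE_eq_0_if_indefinite_integral_eq_0[OF Bochner_Integration.integrable_diff[OF h2 g2]],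
      rule ballI)
    fix t assume t: "t \<in> {0..L}"
    have "integral\<^sup>L (lebesgue_on {0..t}) (\<lambda>x. h2 x - g2 x)
        = integral\<^sup>L (lebesgue_on {0..t}) h2 - integral\<^sup>L (lebesgue_on {0..t}) g2"
      using t integrable_subinterval[OF h2, of 0 t] integrable_subinterval[OF g2, of 0 t]
      by (intro Bochner_Integration.integral_diff) auto
    also have "\<dots> = (h1 t - h1 0) - (g1 t - g1 0)"
      using increment_eq_integral[OF h2 H2_weakD(3)[OF H], of 0 t]
        increment_eq_integral[OF g2 H2_weakD(3)[OF G], of 0 t] t by simp
    also have "\<dots> = 0"
      using H2_weak_derivative_unique[OF H G] t L False by simp
    finally show "integral\<^sup>L (lebesgue_on {0..t}) (\<lambda>x. h2 x - g2 x) = 0" .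
  qed
  then show ?thesis by eventually_elim simp
qed

lemma bending_eq_integral:
  assumes H: "H2_weak L h h1 h2" and L: "0 \<le> L"
  shows "bending L h = integral\<^sup>L (lebesgue_on {0..L}) (\<lambda>t. (h2 t)\<^sup>2) / 2"
proof -
  define s where "s = (SOME h2. \<exists>h1. H2_weak L h h1 h2)"
  have "\<exists>h1. H2_weak L h h1 s"
    unfolding s_def using someI_ex[of "\<lambda>h2. \<exists>h1. H2_weak L h h1 h2"] H by blast
  then obtain s1 where S: "H2_weak L h s1 s" by blast
  have "integral\<^sup>L (lebesgue_on {0..L}) (\<lambda>t. (s t)\<^sup>2) = integral\<^sup>L (lebesgue_on {0..L}) (\<lambda>t. (h2 t)\<^sup>2)"
  proof (rule integral_cong_AE)
    show "(\<lambda>t. (s t)\<^sup>2) \<in> borel_measurable (lebesgue_on {0..L})"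
      "(\<lambda>t. (h2 t)\<^sup>2) \<in> borel_measurable (lebesgue_on {0..L})"
      using H2_weakD(2)[OF S] H2_weakD(2)[OF H] by auto
    show "AE t in lebesgue_on {0..L}. (s t)\<^sup>2 = (h2 t)\<^sup>2"
      using H2_weak_second_derivative_unique_AE[OF H S L] by eventually_elim simp
  qed
  then show ?thesis unfolding bending_def s_def[symmetric] Let_def by simp
qed

lemma bending_0 [simp]: "bending 0 h = 0"
  unfolding bending_def Let_def by (simp add: integral_eq_zero_AE AE_lebesgue_on_singleton)

lemma bending_split:
  assumes H: "H2_weak L h h1 h2" and l: "0 \<le> l" "l \<le> L"
  shows "bending L h = bending l h + integral\<^sup>L (lebesgue_on {l..L}) (\<lambda>t. (h2 t)\<^sup>2) / 2"
proof -
  have "integral\<^sup>L (lebesgue_on {0..L}) (\<lambda>t. (h2 t)\<^sup>2)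
      = integral\<^sup>L (lebesgue_on {0..l}) (\<lambda>t. (h2 t)\<^sup>2) + integral\<^sup>L (lebesgue_on {l..L}) (\<lambda>t. (h2 t)\<^sup>2)"
    using H2_weakD(2)[OF H] l by (intro integral_combine) auto
  then show ?thesis
    using bending_eq_integral[OF H] bending_eq_integral[OF H2_weak_restrict[OF H l]] l by simp
qed

lemma bending_mono:
  assumes "H2_weak L h h1 h2" "0 \<le> l" "l \<le> L"
  shows "bending l h \<le> bending L h"
  using bending_split[OF assms] by (simp add: Bochner_Integration.integral_nonneg)

lemma H2_weak_affine_if_second_derivative_AE_0:
  assumes H: "H2_weak L h h1 h2" and l: "0 \<le> l" "l \<le> L"
    and zero: "AE x in lebesgue_on {l..L}. h2 x = 0"
  shows "\<forall>t\<in>{l..L}. h t = h l + h1 l * (t - l)"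
proof
  fix t assume t: "t \<in> {l..L}"
  have const: "h1 s = h1 l" if s: "s \<in> {l..t}" for s
  proof -
    have "AE x in lebesgue. x \<in> {l..L} \<longrightarrow> h2 x = 0"
      using zero by (subst (asm) AE_restrict_space_iff) auto
    then have "AE x in lebesgue_on {l..s}. h2 x = 0"
      by (subst AE_restrict_space_iff) (use s t in \<open>auto elim!: eventually_mono\<close>)
    then have "integral\<^sup>L (lebesgue_on {l..s}) h2 = 0" by (rule integral_eq_zero_AE)
    then show ?thesis
      using increment_eq_integral[OF H2_weakD(1,3)[OF H], of l s] s t l by simp
  qed
  have "integral\<^sup>L (lebesgue_on {l..t}) h1 = integral\<^sup>L (lebesgue_on {l..t}) (\<lambda>_. h1 l)"
  proof (rule Bochner_Integration.integral_cong)
    fix x assume "x \<in> space (lebesgue_on {l..t})"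
    then show "h1 x = h1 l" by (intro const) simp
  qed simp
  also have "\<dots> = h1 l * (t - l)" using t by (intro integral_lebesgue_on_const) simp
  finally show "h t = h l + h1 l * (t - l)"
    using increment_eq_integral[OF H2_weak_integrable_derivative[OF H] H2_weakD(4)[OF H], of l t] t l
    by simp
qed

lemma H2_weak_affine_beyond_if_bending_le:
  assumes H: "H2_weak L h h1 h2" and l: "0 \<le> l" "l \<le> L"
    and le: "bending L h \<le> bending l h"
  shows "\<forall>t\<in>{l..L}. h t = h l + h1 l * (t - l)"
proof (rule H2_weak_affine_if_second_derivative_AE_0[OF H l])
  have sq: "integrable (lebesgue_on {l..L}) (\<lambda>t. (h2 t)\<^sup>2)"
    using integrable_subinterval[OF H2_weakD(2)[OF H], of l L] l by simp
  have "0 \<le> integral\<^sup>L (lebesgue_on {l..L}) (\<lambda>t. (h2 t)\<^sup>2)"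
    by (rule Bochner_Integration.integral_nonneg) simp
  then have "integral\<^sup>L (lebesgue_on {l..L}) (\<lambda>t. (h2 t)\<^sup>2) = 0"
    using bending_split[OF H l] le by linarith
  then have "AE x in lebesgue_on {l..L}. (h2 x)\<^sup>2 = 0"
    using integral_nonneg_eq_0_iff_AE[OF sq] by simp
  then show "AE x in lebesgue_on {l..L}. h2 x = 0" by eventually_elim simp
qed

section \<open>Extension by zero\<close>

definition zero_extend :: "real \<Rightarrow> (real \<Rightarrow> real) \<Rightarrow> real \<Rightarrow> real" where
  "zero_extend l g t = (if t \<le> l then g t else 0)"

lemma indicator_mult_zero_extend:
  "indicator {0..s} t * zero_extend l f t = indicator {0..min s l} t * (f t :: real)"
  by (auto simp: zero_extend_def indicator_def)

lemma integral_zero_extend: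
  fixes f :: "real \<Rightarrow> real"
  shows "integral\<^sup>L (lebesgue_on {0..s}) (zero_extend l f) = integral\<^sup>L (lebesgue_on {0..min s l}) f"
  by (simp add: integral_lebesgue_on_eq_indicator indicator_mult_zero_extend)

lemma integrable_zero_extend_iff:
  fixes f :: "real \<Rightarrow> real"
  shows "integrable (lebesgue_on {0..s}) (zero_extend l f) \<longleftrightarrow> integrable (lebesgue_on {0..min s l}) f"
  by (simp add: integrable_lebesgue_on_iff_indicator indicator_mult_zero_extend)

lemma zero_extend_indefinite_integral:
  fixes F f :: "real \<Rightarrow> real"
  assumes F: "\<forall>t\<in>{0..l}. F t = F 0 + integral\<^sup>L (lebesgue_on {0..t}) f"
    and Fl: "F l = 0" and t: "0 \<le> l" "0 \<le> t"
  shows "zero_extend l F t = zero_extend l F 0 + integral\<^sup>L (lebesgue_on {0..t}) (zero_extend l f)"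
proof -
  have "zero_extend l F 0 = F 0"
    using t by (simp add: zero_extend_def)
  moreover have "integral\<^sup>L (lebesgue_on {0..t}) (zero_extend l f) = integral\<^sup>L (lebesgue_on {0..min t l}) f"
    by (rule integral_zero_extend)
  moreover have "min t l \<in> {0..l}" using t by simp
  then have "F (min t l) = F 0 + integral\<^sup>L (lebesgue_on {0..min t l}) f" using F by blast
  moreover have "zero_extend l F t = F (min t l)"
    using Fl by (simp add: zero_extend_def min_def)
  ultimately show ?thesis by simp
qed

lemma H2_weak_zero_extend:
  assumes G: "H2_weak l g g1 g2" and l: "0 \<le> l" "l \<le> L" and gl: "g l = 0" "g1 l = 0"
  shows "H2_weak L (zero_extend l g) (zero_extend l g1) (zero_extend l g2)"
  unfolding H2_weak_def
proof (intro conjI ballI)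
  show "integrable (lebesgue_on {0..L}) (zero_extend l g2)"
    using H2_weakD(1)[OF G] l by (simp add: integrable_zero_extend_iff min_absorb2)
  have "(\<lambda>t. (zero_extend l g2 t)\<^sup>2) = zero_extend l (\<lambda>t. (g2 t)\<^sup>2)"
    by (auto simp: zero_extend_def)
  then show "integrable (lebesgue_on {0..L}) (\<lambda>t. (zero_extend l g2 t)\<^sup>2)"
    using H2_weakD(2)[OF G] l by (simp add: integrable_zero_extend_iff min_absorb2)
  fix t assume t: "t \<in> {0..L}"
  then show "zero_extend l g1 t = zero_extend l g1 0 + integral\<^sup>L (lebesgue_on {0..t}) (zero_extend l g2)"
    by (intro zero_extend_indefinite_integral[OF H2_weakD(3)[OF G] gl(2) l(1)]) simp
  show "zero_extend l g t = zero_extend l g 0 + integral\<^sup>L (lebesgue_on {0..t}) (zero_extend l g1)"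
    using t by (intro zero_extend_indefinite_integral[OF H2_weakD(4)[OF G] gl(1) l(1)]) simp
qed

lemma bending_zero_extend:
  assumes G: "H2_weak l g g1 g2" and l: "0 \<le> l" "l \<le> L" and gl: "g l = 0" "g1 l = 0"
  shows "bending L (zero_extend l g) = bending l g"
proof -
  have "(\<lambda>t. (zero_extend l g2 t)\<^sup>2) = zero_extend l (\<lambda>t. (g2 t)\<^sup>2)"
    by (auto simp: zero_extend_def)
  then show ?thesis
    using bending_eq_integral[OF H2_weak_zero_extend[OF G l gl]] bending_eq_integral[OF G l(1)] l
    by (simp add: integral_zero_extend min_absorb2)
qed

lemma zero_set_zero_extend_measure:
  assumes G: "H2_weak l g g1 g2" and l: "0 \<le> l" "l \<le> L" and gl: "g l = 0" "g1 l = 0"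
  shows "L - l \<le> measure lebesgue {t\<in>{0..L}. zero_extend l g t = 0}"
proof -
  have "measure lebesgue {l..L} \<le> measure lebesgue {t\<in>{0..L}. zero_extend l g t = 0}"
    using continuous_on_zero_set_lmeasurable[OF H2_weak_continuous[OF H2_weak_zero_extend[OF G l gl]]]
      l gl by (intro measure_mono_fmeasurable) (auto simp: zero_extend_def)
  then show ?thesis using l by simp
qed

lemma Sigma_f_zero_extend_le:
  assumes G: "H2_weak l g g1 g2" and l: "0 \<le> l" "l \<le> 1" and gl: "g l = 0" "g1 l = 0"
    and \<tau>: "0 \<le> \<tau>"
  shows "Sigma_f \<tau> (zero_extend l g) \<le> bending l g - \<tau> * (1 - l)"
  using bending_zero_extend[OF G l gl] mult_left_mono[OF zero_set_zero_extend_measure[OF G l gl] \<tau>]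
  unfolding Sigma_f_def by linarith

section \<open>Zeros of positive measure\<close>

lemma measure_pos_imp_two_points:
  fixes A :: "real set"
  assumes "0 < measure lebesgue A"
  obtains p q where "p \<in> A" "q \<in> A" "p < q"
proof -
  have "infinite A"
  proof
    assume "finite A"
    then have "measure lebesgue A = 0" by (simp add: negligible_finite negligible_imp_measure0)
    with assms show False by simp
  qed
  then obtain p where p: "p \<in> A" by (metis finite.emptyI ex_in_conv)
  have "infinite (A - {p})" using \<open>infinite A\<close> by simp
  then obtain q where "q \<in> A - {p}" by (metis finite.emptyI ex_in_conv)
  then have q: "q \<in> A" "q \<noteq> p" by auto
  show ?thesis
  proof (cases "p < q")
    case True
    with p q show ?thesis by (intro that)
  next
    case False
    with p q show ?thesis by (intro that[of q p]) auto
  qed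
qed

text \<open>Take \<open>l\<close> the infimum of those \<open>t\<close> with \<open>|Z \<inter> [a, t]| > 0\<close>; then \<open>|Z \<inter> [a, l]| = 0\<close>
  because \<open>|Z \<inter> [s, t]| \<le> t - s\<close>.\<close>

lemma first_point_of_positive_measure:
  fixes Z :: "real set"
  assumes Z: "Z \<in> lmeasurable" "Z \<subseteq> {a..b}" and pos: "0 < measure lebesgue Z"
  obtains l where "a \<le> l" "l < b" "measure lebesgue Z \<le> b - l"
    "\<And>t. l < t \<Longrightarrow> t \<le> b \<Longrightarrow> 0 < measure lebesgue (Z \<inter> {l..t})"
proof -
  define F where "F t = measure lebesgue (Z \<inter> {a..t})" for t
  have ZI: "Z \<inter> {s..t} \<in> lmeasurable" for s t using Z by (intro fmeasurable.Int) auto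
  have F_mono: "F s \<le> F t" if "s \<le> t" for s t
    unfolding F_def by (rule measure_mono_fmeasurable) (use that ZI in auto)
  have F_step: "F t \<le> F s + measure lebesgue (Z \<inter> {s..t})" if "s \<le> t" for s t
  proof -
    have "F t \<le> measure lebesgue ((Z \<inter> {a..s}) \<union> (Z \<inter> {s..t}))"
      unfolding F_def by (rule measure_mono_fmeasurable) (use that ZI in auto)
    also have "\<dots> \<le> F s + measure lebesgue (Z \<inter> {s..t})"
      unfolding F_def by (rule measure_Un_le) (use ZI in auto)
    finally show ?thesis .
  qed
  have small: "measure lebesgue (Z \<inter> {s..t}) \<le> t - s" if "s \<le> t" for s t
    using measure_mono_fmeasurable[of "Z \<inter> {s..t}" "{s..t}" lebesgue] ZI that by simp
  have Fb: "F b = measure lebesgue Z"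
    using Z by (simp add: F_def Int_absorb2)
  have "Z \<noteq> {}" using pos by auto
  then have "a \<le> b" using Z by auto
  define S where "S = {t\<in>{a..b}. 0 < F t}"
  define l where "l = Inf S"
  have "b \<in> S" using pos Fb \<open>a \<le> b\<close> by (simp add: S_def)
  have S_bdd: "bdd_below S" by (rule bdd_belowI[of _ a]) (auto simp: S_def)
  have "a \<le> l" unfolding l_def using \<open>b \<in> S\<close> by (intro cInf_greatest) (auto simp: S_def)
  have "l \<le> b" unfolding l_def by (rule cInf_lower[OF \<open>b \<in> S\<close> S_bdd])
  have Fl: "F l = 0"
  proof (rule ccontr)
    assume "F l \<noteq> 0"
    moreover have "0 \<le> F l" unfolding F_def by (rule measure_nonneg)
    ultimately have "0 < F l" by simp
    define s where "s = max a (l - F l / 2)"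
    have "s < l"
    proof (rule ccontr)
      assume "\<not> s < l"
      then have "l = a" using \<open>a \<le> l\<close> \<open>0 < F l\<close> by (simp add: s_def max_def split: if_splits)
      then show False using small[of a a] \<open>0 < F l\<close> by (simp add: F_def)
    qed
    have "s \<notin> S"
    proof
      assume "s \<in> S"
      then have "l \<le> s" unfolding l_def by (rule cInf_lower[OF _ S_bdd])
      with \<open>s < l\<close> show False by simp
    qed
    then have "F s \<le> 0" using \<open>s < l\<close> \<open>l \<le> b\<close> by (auto simp: S_def s_def)
    moreover have "l - s \<le> F l / 2"
      using max.cobounded2[of "l - F l / 2" a] unfolding s_def by linarith
    ultimately show False
      using F_step[OF less_imp_le[OF \<open>s < l\<close>]] small[OF less_imp_le[OF \<open>s < l\<close>]] \<open>0 < F l\<close>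
      by linarith
  qed
  show ?thesis
  proof
    show "a \<le> l" by fact
    show "l < b" using \<open>l \<le> b\<close> Fl Fb pos by (cases "l = b") auto
    show "measure lebesgue Z \<le> b - l"
      using F_step[OF \<open>l \<le> b\<close>] small[OF \<open>l \<le> b\<close>] Fl Fb by linarith
    fix t assume t: "l < t" "t \<le> b"
    obtain s where s: "s \<in> S" "s < t"
      using cInf_less_iff[of S t] \<open>b \<in> S\<close> S_bdd t by (auto simp: l_def)
    have "0 < F t" using s F_mono[of s t] by (auto simp: S_def)
    then show "0 < measure lebesgue (Z \<inter> {l..t})"
      using F_step[OF less_imp_le[OF t(1)]] Fl by linarith
  qed
qed

lemma zero_at_accumulation_of_zeros:
  fixes f :: "real \<Rightarrow> real"
  assumes f: "continuous_on {l..b} f" and "l < b"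
    and zeros: "\<And>t. l < t \<Longrightarrow> t \<le> b \<Longrightarrow> \<exists>z\<in>{l..t}. f z = 0"
  shows "f l = 0"
proof (rule ccontr)
  assume "f l \<noteq> 0"
  then have "0 < \<bar>f l\<bar>" by simp
  moreover have "l \<in> {l..b}" using \<open>l < b\<close> by simp
  ultimately obtain d where d: "0 < d" "\<forall>x\<in>{l..b}. dist x l < d \<longrightarrow> dist (f x) (f l) < \<bar>f l\<bar>"
    using f unfolding continuous_on_iff by blast
  obtain z where z: "z \<in> {l..min b (l + d / 2)}" "f z = 0"
    using zeros[of "min b (l + d / 2)"] d \<open>l < b\<close> by auto
  then show False using d(2)[rule_format, of z] d(1) by (auto simp: dist_real_def)
qed

lemma H2_weak_double_zero_at_accumulation_of_zeros:
  assumes H: "H2_weak L h h1 h2" and l: "0 \<le> l" "l < L"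
    and pos: "\<And>t. l < t \<Longrightarrow> t \<le> L \<Longrightarrow> 0 < measure lebesgue ({x\<in>{0..L}. h x = 0} \<inter> {l..t})"
  shows "h l = 0" "h1 l = 0"
proof -
  have zeros: "\<exists>z\<in>{l..t}. h z = 0" "\<exists>z\<in>{l..t}. h1 z = 0" if t: "l < t" "t \<le> L" for t
  proof -
    obtain p q where pq: "p \<in> {x\<in>{0..L}. h x = 0} \<inter> {l..t}" "q \<in> {x\<in>{0..L}. h x = 0} \<inter> {l..t}"
      "p < q"
      by (rule measure_pos_imp_two_points[OF pos[OF t]])
    then show "\<exists>z\<in>{l..t}. h z = 0" by blast
    have cont: "continuous_on {p..q} h"
      using H2_weak_continuous[OF H] pq by (auto intro: continuous_on_subset)
    have der: "(h has_derivative (\<lambda>v. h1 x * v)) (at x)" if "p < x" "x < q" for x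
    proof -
      have x: "x \<in> {0..L}" "x \<in> interior {0..L}" using that pq by auto
      then show ?thesis
        using H2_weak_has_derivative[OF H x(1)] at_within_interior[OF x(2)]
        by (simp add: has_field_derivative_def mult_commute_abs)
    qed
    obtain z where z: "p < z" "z < q" "(\<lambda>v. h1 z * v) = (\<lambda>v. 0)"
      using Rolle_deriv[OF pq(3) _ cont der] pq by auto
    then have "h1 z = 0" by (metis mult_cancel_left1 mult_zero_left)
    then show "\<exists>z\<in>{l..t}. h1 z = 0" using z pq by (intro bexI[of _ z]) auto
  qed
  have "continuous_on {l..L} h" "continuous_on {l..L} h1"
    using H2_weak_continuous[OF H] H2_weak_continuous_derivative[OF H] l
    by (auto intro: continuous_on_subset)
  then show "h l = 0" "h1 l = 0"
    using zero_at_accumulation_of_zeros[OF _ l(2)] zeros by blast+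
qed

section \<open>Minimisers of the pinned energy\<close>

lemma minimiser_affine_if_null_zero_set:
  assumes min: "is_minimiser \<tau> a \<alpha> h" and \<tau>: "0 \<le> \<tau>"
    and null: "measure lebesgue {t\<in>{0..1}. h t = 0} = 0"
  shows "\<forall>t\<in>{0..1}. h t = a + \<alpha> * t"
proof -
  obtain h1 h2 where H: "H2_weak 1 h h1 h2" and h0: "h 0 = a" "h1 0 = \<alpha>"
    using min unfolding is_minimiser_def H2a_def by blast
  have "(\<lambda>t. a + \<alpha> * t) \<in> H2a a \<alpha>" unfolding H2a_def using H2_weak_linear by force
  then have "Sigma_f \<tau> h \<le> Sigma_f \<tau> (\<lambda>t. a + \<alpha> * t)"
    using min unfolding is_minimiser_def by blast
  also have "\<dots> \<le> 0"
    using bending_eq_integral[OF H2_weak_linear[of 1 a \<alpha>]] \<tau>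
      measure_nonneg[of lebesgue "{t\<in>{0..1}. a + \<alpha> * t = 0}"]
    unfolding Sigma_f_def by simp
  finally have "bending 1 h \<le> bending 0 h" using null unfolding Sigma_f_def by simp
  then have "\<forall>t\<in>{0..1}. h t = h 0 + h1 0 * (t - 0)"
    by (intro H2_weak_affine_beyond_if_bending_le[OF H]) simp_all
  then show ?thesis using h0 by simp
qed

text \<open>Extending a clamped competitor on \<open>[0, l]\<close> by zero gains at least \<open>\<tau> (1 - l)\<close> of pinning
  energy, which is all that \<open>h\<close> can have if its zero set has measure at most \<open>1 - l\<close>.\<close>

lemma minimiser_bending_le_clamped:
  assumes min: "is_minimiser \<tau> a \<alpha> h" and \<tau>: "0 \<le> \<tau>" and l: "0 \<le> l" "l \<le> 1"
    and zeros: "measure lebesgue {t\<in>{0..1}. h t = 0} \<le> 1 - l"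
    and g: "g \<in> H2_clamped l a \<alpha>"
  shows "bending 1 h \<le> bending l g"
proof -
  obtain g1 g2 where G: "H2_weak l g g1 g2" and g0: "g 0 = a" "g1 0 = \<alpha>" and gl: "g l = 0" "g1 l = 0"
    using g unfolding H2_clamped_def by blast
  have "H2_weak 1 (zero_extend l g) (zero_extend l g1) (zero_extend l g2)"
    by (rule H2_weak_zero_extend[OF G l gl])
  moreover have "zero_extend l g 0 = a" "zero_extend l g1 0 = \<alpha>"
    using g0 l by (simp_all add: zero_extend_def)
  ultimately have "zero_extend l g \<in> H2a a \<alpha>" unfolding H2a_def by blast
  then have "Sigma_f \<tau> h \<le> Sigma_f \<tau> (zero_extend l g)"
    using min unfolding is_minimiser_def by blast
  also have "\<dots> \<le> bending l g - \<tau> * (1 - l)"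
    by (rule Sigma_f_zero_extend_le[OF G l gl \<tau>])
  finally show ?thesis
    using mult_left_mono[OF zeros \<tau>] unfolding Sigma_f_def by linarith
qed

lemma minimiser_clamped_min_then_zero:
  assumes min: "is_minimiser \<tau> a \<alpha> h" and \<tau>: "0 \<le> \<tau>"
    and pos: "0 < measure lebesgue {t\<in>{0..1}. h t = 0}"
  obtains l where "0 \<le> l" "l < 1" "is_clamped_min l a \<alpha> h" "\<forall>t\<in>{l..1}. h t = 0"
proof -
  obtain h1 h2 where H: "H2_weak 1 h h1 h2" and h0: "h 0 = a" "h1 0 = \<alpha>"
    using min unfolding is_minimiser_def H2a_def by blast
  define Z where "Z = {t\<in>{0..1}. h t = 0}"
  have "Z \<in> lmeasurable"
    unfolding Z_def by (rule continuous_on_zero_set_lmeasurable[OF H2_weak_continuous[OF H]])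
  moreover have "Z \<subseteq> {0..1}" by (auto simp: Z_def)
  ultimately obtain l where l: "0 \<le> l" "l < 1" "measure lebesgue Z \<le> 1 - l"
    and accumulate: "\<And>t. l < t \<Longrightarrow> t \<le> 1 \<Longrightarrow> 0 < measure lebesgue (Z \<inter> {l..t})"
    using pos unfolding Z_def[symmetric] by (rule first_point_of_positive_measure) blast
  have hl: "h l = 0" "h1 l = 0"
    using H2_weak_double_zero_at_accumulation_of_zeros[OF H l(1,2) accumulate[unfolded Z_def]]
    by auto
  have clamped: "h \<in> H2_clamped l a \<alpha>"
    using H2_weak_restrict[OF H] l h0 hl unfolding H2_clamped_def by fastforce
  have le: "bending 1 h \<le> bending l g" if "g \<in> H2_clamped l a \<alpha>" for g
    using minimiser_bending_le_clamped[OF min \<tau> l(1) less_imp_le[OF l(2)] l(3)[unfolded Z_def] that] .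
  have "bending l h \<le> bending 1 h" using bending_mono[OF H l(1)] l(2) by simp
  then have "is_clamped_min l a \<alpha> h"
    unfolding is_clamped_min_def using clamped le by (blast intro: order_trans)
  moreover have "\<forall>t\<in>{l..1}. h t = 0"
    using H2_weak_affine_beyond_if_bending_le[OF H _ _ le[OF clamped]] l hl by simp
  ultimately show ?thesis using l that by blast
qed

theorem proposition2p1:
  fixes a \<alpha> \<epsilon> :: real and \<tau> :: "real \<Rightarrow> real" and h :: "real \<Rightarrow> real"
  assumes "\<epsilon> \<ge> 0" and "\<tau> \<epsilon> \<ge> 0"
    and "is_minimiser (\<tau> \<epsilon>) a \<alpha> h"
  shows "(\<forall>t\<in>{0..1}. h t = a + \<alpha> * t) \<or>
         (\<exists>l\<in>{0<..<1}. \<exists>c. is_clamped_min l a \<alpha> c \<and>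
             (\<forall>t\<in>{0..<l}. h t = c t) \<and> (\<forall>t\<in>{l..1}. h t = 0))"
proof (cases "measure lebesgue {t\<in>{0..1}. h t = 0} = 0")
  case True
  with minimiser_affine_if_null_zero_set[OF assms(3,2)] show ?thesis by blast
next
  case False
  then have "0 < measure lebesgue {t\<in>{0..1}. h t = 0}"
    using measure_nonneg[of lebesgue "{t\<in>{0..1}. h t = 0}"] by linarith
  then obtain l where l: "0 \<le> l" "l < 1" and opt: "is_clamped_min l a \<alpha> h"
    and tail: "\<forall>t\<in>{l..1}. h t = 0"
    by (rule minimiser_clamped_min_then_zero[OF assms(3,2)]) blast
  show ?thesis
  proof (cases "l = 0")
    case True
    \<comment> \<open>clamping at \<open>0\<close> forces \<open>a = \<alpha> = 0\<close>, so \<open>h = 0\<close> falls under the affine case\<close>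
    then have "a = 0" "\<alpha> = 0" using opt by (auto simp: is_clamped_min_def H2_clamped_def)
    with tail True show ?thesis by simp
  next
    case False
    with l opt tail show ?thesis by auto
  qed
qed

end
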